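(* Let $\alpha: I\to M$ be a unit-speed curve on an oriented surface $M\subset E^3$ with Darboux frame $\{T,V,U\}$ and curvatures $k_g,k_n,\tau_g$, and assume $(k_g(s),\tau_g(s))\neq(0,0)$ for all $s$. Let $\gamma(s)=\alpha(s)+y_1(s)T(s)+y_2(s)V(s)+y_3(s)U(s)$, with $y_i$ smooth, be an associated curve whose tangent $\gamma'(s)$ is linearly dependent with $V(s)$, i.e. $\gamma'(s)=R(s)V(s)$ with $R(s)\neq0$ for all $s$. Then the following are equivalent: (i) $\gamma$ is a general helix; (ii) $\alpha$ is a relatively normal-slant helix; (iii) $\alpha$ is a $D_r$-Darboux slant helix.
   Context: $M$ is an oriented surface in Euclidean 3-space $E^3$ and $\alpha:I\to M$ is a unit-speed curve with arc-length parameter $s$. Its Darboux frame $\{T,V,U\}$ consists of the unit tangent $T=\alpha'$, the unit surface normal $U$ of $M$ along $\alpha$, and $V=U\times T$; it satisfies $T'=k_gV+k_nU$, $V'=-k_gT+\tau_gU$, $U'=-k_nT-\tau_gV$, where $k_g,k_n,\tau_g$ are the geodesic curvature, normal curvature and geodesic torsion. A regular curve is a general helix if its unit tangent makes a constant angle with a fixed direction. $\alpha$ is a relatively normal-slant helix if $\langle V,d\rangle$ is constant for some fixed unit vector $d$. The rectifying Darboux vector field is $D_r=\tau_gT+k_gU$; $\alpha$ is a $D_r$-Darboux slant helix if $D_r/\|D_r\|$ makes a constant angle with a fixed unit direction. *)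

theory Defs
  imports "HOL-Analysis.Analysis" "HOL-Analysis.Cross3"
begin

definition iter_deriv :: "nat \<Rightarrow> (real \<Rightarrow> 'a::real_normed_vector) \<Rightarrow> real \<Rightarrow> 'a" where
  "iter_deriv n f = ((\<lambda>g t. vector_derivative g (at t)) ^^ n) f"

definition smooth_on :: "real set \<Rightarrow> (real \<Rightarrow> 'a::real_normed_vector) \<Rightarrow> bool" where
  "smooth_on S f \<longleftrightarrow> (\<forall>n. \<forall>x\<in>S. iter_deriv n f differentiable (at x))"

text \<open>Darboux frame {T,V,U} of a unit-speed curve alpha with curvatures kg, kn, tg on I:
  T = alpha', U unit (surface normal along alpha) orthogonal to T, V = U x T, and the Darboux equations.\<close>
definition darboux_frame ::
  "real set \<Rightarrow> (real \<Rightarrow> real^3) \<Rightarrow> (real \<Rightarrow> real^3) \<Rightarrow> (real \<Rightarrow> real^3) \<Rightarrow> (real \<Rightarrow> real^3)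
   \<Rightarrow> (real \<Rightarrow> real) \<Rightarrow> (real \<Rightarrow> real) \<Rightarrow> (real \<Rightarrow> real) \<Rightarrow> bool" where
  "darboux_frame I \<alpha> T V U kg kn tg \<longleftrightarrow>
     (\<forall>s\<in>I. (\<alpha> has_vector_derivative T s) (at s)
        \<and> norm (T s) = 1 \<and> norm (U s) = 1 \<and> T s \<bullet> U s = 0
        \<and> V s = cross3 (U s) (T s)
        \<and> (T has_vector_derivative (kg s *\<^sub>R V s + kn s *\<^sub>R U s)) (at s)
        \<and> (V has_vector_derivative (- kg s *\<^sub>R T s + tg s *\<^sub>R U s)) (at s)
        \<and> (U has_vector_derivative (- kn s *\<^sub>R T s - tg s *\<^sub>R V s)) (at s))"

definition general_helix :: "real set \<Rightarrow> (real \<Rightarrow> real^3) \<Rightarrow> bool" where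
  "general_helix I \<gamma> \<longleftrightarrow>
     (\<forall>s\<in>I. \<gamma> differentiable (at s) \<and> vector_derivative \<gamma> (at s) \<noteq> 0) \<and>
     (\<exists>d c. norm d = 1 \<and>
        (\<forall>s\<in>I. (vector_derivative \<gamma> (at s) /\<^sub>R norm (vector_derivative \<gamma> (at s))) \<bullet> d = c))"

definition rel_normal_slant_helix :: "real set \<Rightarrow> (real \<Rightarrow> real^3) \<Rightarrow> bool" where
  "rel_normal_slant_helix I V \<longleftrightarrow> (\<exists>d c. norm d = 1 \<and> (\<forall>s\<in>I. V s \<bullet> d = c))"

definition rect_darboux :: "(real \<Rightarrow> real^3) \<Rightarrow> (real \<Rightarrow> real^3) \<Rightarrow> (real \<Rightarrow> real) \<Rightarrow> (real \<Rightarrow> real) \<Rightarrow> real \<Rightarrow> real^3" where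
  "rect_darboux T U kg tg s = tg s *\<^sub>R T s + kg s *\<^sub>R U s"

definition Dr_slant_helix :: "real set \<Rightarrow> (real \<Rightarrow> real^3) \<Rightarrow> (real \<Rightarrow> real^3) \<Rightarrow> (real \<Rightarrow> real) \<Rightarrow> (real \<Rightarrow> real) \<Rightarrow> bool" where
  "Dr_slant_helix I T U kg tg \<longleftrightarrow>
     (\<exists>d c. norm d = 1 \<and>
        (\<forall>s\<in>I. (rect_darboux T U kg tg s /\<^sub>R norm (rect_darboux T U kg tg s)) \<bullet> d = c))"

end

theory Submission
  imports Defs
begin

(* Since gamma' = R V with R continuous and nowhere zero, the unit tangent of gamma is sgn R * V,
   and sgn R is constant on the interval I; this gives (i) <-> (ii).

   For (ii) <-> (iii) put rho = |D_r| = sqrt (tg^2 + kg^2) > 0, W = D_r / rho,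
   N = (kg T - tg U) / rho, and let theta be the angular speed of the unit vector (tg, kg) / rho.
   The Darboux equations become Frenet-type equations
     W' = kappa N,   N' = - kappa W + rho V,   V' = - rho N,   kappa = theta - kn,
   whose "torsion" rho never vanishes.  For any such triple <W,d>^2 + <N,d>^2 + <V,d>^2 is constant.
   If <V,d> is constant, then rho <N,d> = 0, so <W,d>^2 and hence (by continuity) <W,d> is constant.
   If <W,d> is constant, then kappa <N,d> = 0; unless <V,d> vanishes identically, the set where
   kappa /= 0 is open and closed in I.  Either kappa = 0 on I, so W is a constant unit vector
   orthogonal to V, or <N,d> = 0 on I, so <V,d> is constant. *)

lemma smooth_on_has_vector_derivative:
  assumes "smooth_on S f" "x \<in> S"
  shows "(f has_vector_derivative vector_derivative f (at x)) (at x)"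
proof -
  have "iter_deriv 0 f differentiable (at x)"
    using assms unfolding smooth_on_def by blast
  then show ?thesis
    by (simp add: iter_deriv_def vector_derivative_works[symmetric])
qed

lemma smooth_on_vector_derivative:
  assumes "smooth_on S f"
  shows "smooth_on S (\<lambda>x. vector_derivative f (at x))"
proof -
  have "iter_deriv n (\<lambda>x. vector_derivative f (at x)) = iter_deriv (Suc n) f" for n
    unfolding iter_deriv_def by (simp add: funpow_Suc_right del: funpow.simps)
  then show ?thesis
    using assms unfolding smooth_on_def by metis
qed

lemma smooth_on_has_real_derivative:
  fixes f :: "real \<Rightarrow> real"
  assumes "smooth_on S f" "x \<in> S"
  shows "(f has_real_derivative vector_derivative f (at x)) (at x)"
  using smooth_on_has_vector_derivative[OF assms]
  by (simp add: has_real_derivative_iff_has_vector_derivative)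

lemma smooth_on_continuous_on:
  assumes "smooth_on S f"
  shows "continuous_on S f"
  using has_vector_derivative_at_within[OF smooth_on_has_vector_derivative[OF assms]]
  by (rule continuous_on_vector_derivative)

lemma has_real_derivative_inner_const:
  fixes f :: "real \<Rightarrow> 'a::real_inner"
  assumes "(f has_vector_derivative f') (at s)"
  shows "((\<lambda>t. f t \<bullet> d) has_real_derivative f' \<bullet> d) (at s)"
  using bounded_linear.has_vector_derivative[OF bounded_linear_inner_left assms]
  by (simp add: has_real_derivative_iff_has_vector_derivative)

lemma DERIV_const_on_open_imp_zero:
  fixes f :: "real \<Rightarrow> real"
  assumes "open S" "x \<in> S" "\<forall>y\<in>S. f y = c" "(f has_real_derivative l) (at x)"
  shows "l = 0"
proof -
  obtain e where "e > 0" "ball x e \<subseteq> S"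
    using assms(1,2) openE by blast
  then have "\<forall>y. \<bar>x - y\<bar> < e \<longrightarrow> f x = f y"
    using assms(2,3) by (auto simp: dist_real_def)
  then show ?thesis
    using DERIV_local_const[OF assms(4) \<open>e > 0\<close>] by blast
qed

lemma continuous_on_abs_const_imp_const:
  fixes f :: "'a::topological_space \<Rightarrow> real"
  assumes "connected S" "continuous_on S f" "\<forall>x\<in>S. \<bar>f x\<bar> = k"
  shows "\<exists>c. \<forall>x\<in>S. f x = c"
proof -
  have "f ` S \<subseteq> {k, - k}"
    using assms(3) by (auto simp: abs_if split: if_splits)
  then have "finite (f ` S)"
    using finite_subset by blast
  then show ?thesis
    using continuous_finite_range_constant[OF assms(1,2)] by (simp add: constant_on_def)
qed

lemma has_real_derivative_normalized_pair:
  fixes x y :: "real \<Rightarrow> real"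
  assumes "(x has_real_derivative x') (at s)" "(y has_real_derivative y') (at s)"
    and "(x s)\<^sup>2 + (y s)\<^sup>2 \<noteq> 0"
  shows "((\<lambda>t. x t / sqrt ((x t)\<^sup>2 + (y t)\<^sup>2)) has_real_derivative
           y s / sqrt ((x s)\<^sup>2 + (y s)\<^sup>2) * ((y s * x' - x s * y') / ((x s)\<^sup>2 + (y s)\<^sup>2))) (at s)"
proof -
  define q where "q = (\<lambda>t. (x t)\<^sup>2 + (y t)\<^sup>2)"
  define r where "r = sqrt (q s)"
  have q_pos: "q s > 0"
    using assms(3) sum_power2_ge_zero[of "x s" "y s"] unfolding q_def by linarith
  then have r: "r > 0" "r * r = q s"
    unfolding r_def by simp_all
  have half: "inverse r / 2 * (2 * z) = z / r" for z
    by (simp add: inverse_eq_divide)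
  have "(q has_real_derivative 2 * (x s * x' + y s * y')) (at s)"
    using DERIV_add[OF DERIV_power[OF assms(1), of 2] DERIV_power[OF assms(2), of 2]]
    unfolding q_def by (simp add: distrib_left mult_ac)
  from DERIV_chain2[where f = sqrt and g = q, OF DERIV_real_sqrt[OF q_pos] this]
  have "((\<lambda>t. sqrt (q t)) has_real_derivative (x s * x' + y s * y') / r) (at s)"
    unfolding r_def[symmetric] half .
  from DERIV_divide[OF assms(1) this] r(1)
  have "((\<lambda>t. x t / sqrt (q t)) has_real_derivative
          (x' * r - x s * ((x s * x' + y s * y') / r)) / (r * r)) (at s)"
    unfolding r_def by simp
  also have "(x' * r - x s * ((x s * x' + y s * y') / r)) / (r * r)
      = (x' * (r * r) - x s * (x s * x' + y s * y')) / (r * (r * r))"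
    using r(1) by (simp add: field_simps)
  also have "x' * (r * r) - x s * (x s * x' + y s * y') = y s * (y s * x' - x s * y')"
    unfolding r(2) q_def by (simp add: power2_eq_square algebra_simps)
  finally show ?thesis
    using r unfolding r_def q_def by (simp add: mult.assoc)
qed

lemma general_helix_iff_rel_normal_slant_helix:
  fixes \<gamma> V :: "real \<Rightarrow> real^3" and R :: "real \<Rightarrow> real"
  assumes "connected I"
    and V: "continuous_on I V" "\<And>s. s \<in> I \<Longrightarrow> norm (V s) = 1"
    and R: "continuous_on I R" "\<And>s. s \<in> I \<Longrightarrow> R s \<noteq> 0"
    and \<gamma>: "\<And>s. s \<in> I \<Longrightarrow> (\<gamma> has_vector_derivative R s *\<^sub>R V s) (at s)"
  shows "general_helix I \<gamma> \<longleftrightarrow> rel_normal_slant_helix I V"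
proof -
  have R_nonzero: "\<forall>s\<in>I. R s \<noteq> 0"
    using R(2) by blast
  have "\<exists>\<sigma>. \<forall>s\<in>I. sgn (R s) = \<sigma>"
    by (rule continuous_on_abs_const_imp_const[where k = 1, OF \<open>connected I\<close>
          continuous_on_sgn[OF R(1) R_nonzero]]) (use R_nonzero in simp)
  then obtain \<sigma> where \<sigma>: "\<And>s. s \<in> I \<Longrightarrow> sgn (R s) = \<sigma>"
    by blast
  have \<sigma>_sq: "\<sigma> * \<sigma> = 1" if "s \<in> I" for s
    using sgn_mult_self_eq[of "R s"] \<sigma>[OF that] R(2)[OF that] by simp
  have unit_tangent:
    "vector_derivative \<gamma> (at s) /\<^sub>R norm (vector_derivative \<gamma> (at s)) = \<sigma> *\<^sub>R V s"
    if "s \<in> I" for s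
  proof -
    have "vector_derivative \<gamma> (at s) /\<^sub>R norm (vector_derivative \<gamma> (at s))
        = sgn (R s *\<^sub>R V s)"
      unfolding vector_derivative_at[OF \<gamma>[OF that]] by (rule sgn_div_norm[symmetric])
    also have "\<dots> = sgn (R s) *\<^sub>R sgn (V s)"
      by (rule sgn_scaleR)
    also have "sgn (V s) = V s"
      using V(2)[OF that] by (simp add: sgn_div_norm)
    finally show ?thesis
      using \<sigma>[OF that] by simp
  qed
  have regular: "\<forall>s\<in>I. \<gamma> differentiable (at s) \<and> vector_derivative \<gamma> (at s) \<noteq> 0"
    using \<gamma> vector_derivative_at V(2) R(2) by (fastforce intro: differentiableI_vector)
  show ?thesis
  proof
    assume "general_helix I \<gamma>"
    then obtain d c where "norm d = 1"
      and d: "\<forall>s\<in>I. (vector_derivative \<gamma> (at s) /\<^sub>R norm (vector_derivative \<gamma> (at s))) \<bullet> d = c"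
      unfolding general_helix_def by blast
    have "V s \<bullet> d = \<sigma> * c" if "s \<in> I" for s
    proof -
      have "(\<sigma> *\<^sub>R V s) \<bullet> d = c"
        using d[rule_format, OF that] unfolding unit_tangent[OF that] .
      then have "\<sigma> * (V s \<bullet> d) = c"
        by simp
      then have "(\<sigma> * \<sigma>) * (V s \<bullet> d) = \<sigma> * c"
        by (simp add: mult.assoc)
      then show ?thesis
        using \<sigma>_sq[OF that] by simp
    qed
    then show "rel_normal_slant_helix I V"
      unfolding rel_normal_slant_helix_def using \<open>norm d = 1\<close> by blast
  next
    assume "rel_normal_slant_helix I V"
    then obtain d c where "norm d = 1" and "\<forall>s\<in>I. V s \<bullet> d = c"
      unfolding rel_normal_slant_helix_def by blast
    then have "\<forall>s\<in>I.
        (vector_derivative \<gamma> (at s) /\<^sub>R norm (vector_derivative \<gamma> (at s))) \<bullet> d = \<sigma> * c"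
      using unit_tangent by simp
    then show "general_helix I \<gamma>"
      unfolding general_helix_def using regular \<open>norm d = 1\<close> by blast
  qed
qed

locale frenet_equations =
  fixes I :: "real set" and E1 E2 E3 :: "real \<Rightarrow> 'a::real_inner" and \<kappa> \<tau> :: "real \<Rightarrow> real"
  assumes open_I: "open I" and interval_I: "is_interval I"
    and E1_deriv: "s \<in> I \<Longrightarrow> (E1 has_vector_derivative \<kappa> s *\<^sub>R E2 s) (at s)"
    and E2_deriv: "s \<in> I \<Longrightarrow> (E2 has_vector_derivative - \<kappa> s *\<^sub>R E1 s + \<tau> s *\<^sub>R E3 s) (at s)"
    and E3_deriv: "s \<in> I \<Longrightarrow> (E3 has_vector_derivative - \<tau> s *\<^sub>R E2 s) (at s)"
    and torsion_nonzero: "s \<in> I \<Longrightarrow> \<tau> s \<noteq> 0"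
begin

lemma connected_I: "connected I"
  using interval_I is_interval_connected by blast

lemma convex_I: "convex I"
  using interval_I is_interval_convex by blast

lemma inner_E_deriv:
  assumes "s \<in> I"
  shows "((\<lambda>t. E1 t \<bullet> d) has_real_derivative \<kappa> s * (E2 s \<bullet> d)) (at s)"
    and "((\<lambda>t. E2 t \<bullet> d) has_real_derivative - \<kappa> s * (E1 s \<bullet> d) + \<tau> s * (E3 s \<bullet> d)) (at s)"
    and "((\<lambda>t. E3 t \<bullet> d) has_real_derivative - \<tau> s * (E2 s \<bullet> d)) (at s)"
  using has_real_derivative_inner_const[OF E1_deriv[OF assms], of d]
    has_real_derivative_inner_const[OF E2_deriv[OF assms], of d]
    has_real_derivative_inner_const[OF E3_deriv[OF assms], of d]
  by (simp_all add: inner_add_left inner_diff_left)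

lemma continuous_on_inner_E:
  "continuous_on I (\<lambda>t. E1 t \<bullet> d)" "continuous_on I (\<lambda>t. E2 t \<bullet> d)"
  "continuous_on I (\<lambda>t. E3 t \<bullet> d)"
  unfolding continuous_on_eq_continuous_at[OF open_I]
  using inner_E_deriv DERIV_isCont by blast+

lemma sum_sq_inner_E_const:
  obtains K where "\<And>s. s \<in> I \<Longrightarrow> (E1 s \<bullet> d)\<^sup>2 + (E2 s \<bullet> d)\<^sup>2 + (E3 s \<bullet> d)\<^sup>2 = K"
proof -
  have "((\<lambda>t. (E1 t \<bullet> d)\<^sup>2 + (E2 t \<bullet> d)\<^sup>2 + (E3 t \<bullet> d)\<^sup>2) has_real_derivative 0) (at s within I)"
    if "s \<in> I" for s
  proof -
    have cancel: "of_nat 2 * (k * q * a ^ (2 - Suc 0))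
        + of_nat 2 * ((- k * a + t * b) * q ^ (2 - Suc 0))
        + of_nat 2 * (- t * q * b ^ (2 - Suc 0)) = (0::real)" for k t a q b :: real
      by (simp add: algebra_simps)
    show ?thesis
      using DERIV_add[OF
          DERIV_add[OF DERIV_power[OF inner_E_deriv(1)[OF that, where d = d], where n = 2]
            DERIV_power[OF inner_E_deriv(2)[OF that, where d = d], where n = 2]]
          DERIV_power[OF inner_E_deriv(3)[OF that, where d = d], where n = 2]]
      unfolding cancel by (rule has_field_derivative_at_within)
  qed
  then show ?thesis
    using has_field_derivative_zero_constant[OF convex_I] that by blast
qed

lemma const_inner_E3_imp_const_inner_E1:
  assumes "\<forall>s\<in>I. E3 s \<bullet> d = c"
  shows "\<exists>c'. \<forall>s\<in>I. E1 s \<bullet> d = c'"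
proof -
  have E2_perp: "E2 s \<bullet> d = 0" if "s \<in> I" for s
    using DERIV_const_on_open_imp_zero[OF open_I that assms inner_E_deriv(3)[OF that]]
      torsion_nonzero[OF that] by simp
  obtain K where K: "\<And>s. s \<in> I \<Longrightarrow> (E1 s \<bullet> d)\<^sup>2 + (E2 s \<bullet> d)\<^sup>2 + (E3 s \<bullet> d)\<^sup>2 = K"
    using sum_sq_inner_E_const[where d = d] by blast
  have "\<bar>E1 s \<bullet> d\<bar> = sqrt (K - c\<^sup>2)" if "s \<in> I" for s
  proof -
    have "(E1 s \<bullet> d)\<^sup>2 = K - c\<^sup>2"
      using K[OF that] E2_perp[OF that] assms that by simp
    then show ?thesis
      using real_sqrt_abs[of "E1 s \<bullet> d"] by simp
  qed
  then show ?thesis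
    using continuous_on_abs_const_imp_const[OF connected_I continuous_on_inner_E(1)] by blast
qed

lemma curvature_mult_inner_E2_eq_0:
  assumes "\<forall>s\<in>I. E1 s \<bullet> d = c" "s \<in> I"
  shows "\<kappa> s * (E2 s \<bullet> d) = 0"
  using DERIV_const_on_open_imp_zero[OF open_I assms(2,1) inner_E_deriv(1)[OF assms(2)]] .

lemma curvature_zero_everywhere_or_nowhere:
  assumes cont: "continuous_on I \<kappa>" "continuous_on I \<tau>"
    and c: "\<forall>s\<in>I. E1 s \<bullet> d = c"
    and K: "\<And>s. s \<in> I \<Longrightarrow> (E1 s \<bullet> d)\<^sup>2 + (E2 s \<bullet> d)\<^sup>2 + (E3 s \<bullet> d)\<^sup>2 = K"
    and "c\<^sup>2 \<noteq> K"
  shows "(\<forall>s\<in>I. \<kappa> s = 0) \<or> (\<forall>s\<in>I. \<kappa> s \<noteq> 0)"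
proof -
  define A where "A = {s \<in> I. \<kappa> s \<noteq> 0}"
  have A_open: "open A"
  proof -
    have "A = I \<inter> \<kappa> -` (- {0})"
      unfolding A_def by auto
    then show ?thesis
      using continuous_open_preimage[OF cont(1) open_I, of "- {0}"] by auto
  qed
  have A_eq: "A = {s \<in> I. E2 s \<bullet> d = 0} \<inter> {s \<in> I. \<kappa> s * c - \<tau> s * (E3 s \<bullet> d) = 0}"
  proof (intro equalityI subsetI)
    fix s
    assume "s \<in> A"
    then have s: "s \<in> I" "\<kappa> s \<noteq> 0"
      unfolding A_def by auto
    have E2_perp: "\<forall>t\<in>A. E2 t \<bullet> d = 0"
      using curvature_mult_inner_E2_eq_0[OF c] unfolding A_def by auto
    have "- \<kappa> s * (E1 s \<bullet> d) + \<tau> s * (E3 s \<bullet> d) = 0"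
      using DERIV_const_on_open_imp_zero[OF A_open \<open>s \<in> A\<close> E2_perp inner_E_deriv(2)[OF s(1)]] .
    then show "s \<in> {s \<in> I. E2 s \<bullet> d = 0} \<inter> {s \<in> I. \<kappa> s * c - \<tau> s * (E3 s \<bullet> d) = 0}"
      using E2_perp \<open>s \<in> A\<close> s(1) c by auto
  next
    fix s
    assume "s \<in> {s \<in> I. E2 s \<bullet> d = 0} \<inter> {s \<in> I. \<kappa> s * c - \<tau> s * (E3 s \<bullet> d) = 0}"
    then have s: "s \<in> I" "E2 s \<bullet> d = 0" "\<kappa> s * c = \<tau> s * (E3 s \<bullet> d)"
      by auto
    show "s \<in> A"
    proof (rule ccontr)
      assume "s \<notin> A"
      then have "E3 s \<bullet> d = 0"
        using s torsion_nonzero[OF s(1)] unfolding A_def by simp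
      then have "K = c\<^sup>2"
        using K[OF s(1)] c[rule_format, OF s(1)] s(2) by simp
      then show False
        using \<open>c\<^sup>2 \<noteq> K\<close> by simp
    qed
  qed
  have "openin (top_of_set I) A"
    using A_open by (rule open_subset[rotated]) (auto simp: A_def)
  moreover have "closedin (top_of_set I) A"
    unfolding A_eq
    by (intro closedin_Int continuous_closedin_preimage_constant continuous_on_inner_E
        continuous_intros cont)
  ultimately have "A = {} \<or> A = I"
    using connected_I connected_clopen by blast
  then show ?thesis
    unfolding A_def by auto
qed

lemma const_inner_E1_imp_const_inner_E3:
  assumes cont: "continuous_on I \<kappa>" "continuous_on I \<tau>" and "I \<noteq> {}"
    and unit: "\<And>s. s \<in> I \<Longrightarrow> norm (E1 s) = 1"
    and perp: "\<And>s. s \<in> I \<Longrightarrow> E3 s \<bullet> E1 s = 0"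
    and "norm d = 1" and c: "\<forall>s\<in>I. E1 s \<bullet> d = c"
  shows "\<exists>e c'. norm e = 1 \<and> (\<forall>s\<in>I. E3 s \<bullet> e = c')"
proof -
  obtain K where K: "\<And>s. s \<in> I \<Longrightarrow> (E1 s \<bullet> d)\<^sup>2 + (E2 s \<bullet> d)\<^sup>2 + (E3 s \<bullet> d)\<^sup>2 = K"
    using sum_sq_inner_E_const[where d = d] by blast
  consider "c\<^sup>2 = K" | "\<forall>s\<in>I. \<kappa> s = 0" | "\<forall>s\<in>I. \<kappa> s \<noteq> 0"
    using curvature_zero_everywhere_or_nowhere[OF cont c K] by blast
  then show ?thesis
  proof cases
    case 1
    have "E3 s \<bullet> d = 0" if "s \<in> I" for s
      using K[OF that] c[rule_format, OF that] 1 by (simp add: sum_power2_eq_zero_iff)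
    then have "\<forall>s\<in>I. E3 s \<bullet> d = 0"
      by blast
    then show ?thesis
      using \<open>norm d = 1\<close> by blast
  next
    case 2
    have "(E1 has_vector_derivative 0) (at s within I)" if "s \<in> I" for s
      by (rule has_vector_derivative_at_within) (use E1_deriv[OF that] 2 that in simp)
    then obtain e where e: "\<And>s. s \<in> I \<Longrightarrow> E1 s = e"
      using has_vector_derivative_zero_constant[OF convex_I] by blast
    obtain s0 where "s0 \<in> I"
      using \<open>I \<noteq> {}\<close> by blast
    then have "norm e = 1"
      using unit e by metis
    moreover have "\<forall>s\<in>I. E3 s \<bullet> e = 0"
      using perp e by metis
    ultimately show ?thesis
      by blast
  next
    case 3
    then have E2_perp: "\<forall>s\<in>I. E2 s \<bullet> d = 0"
      using curvature_mult_inner_E2_eq_0[OF c] by auto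
    have "((\<lambda>t. E3 t \<bullet> d) has_real_derivative 0) (at s within I)" if "s \<in> I" for s
      by (rule has_field_derivative_at_within)
        (use inner_E_deriv(3)[OF that, where d = d] E2_perp that in simp)
    then obtain c' where "\<forall>s\<in>I. E3 s \<bullet> d = c'"
      using has_field_derivative_zero_constant[OF convex_I] by blast
    then show ?thesis
      using \<open>norm d = 1\<close> by blast
  qed
qed

end

locale darboux_curve =
  fixes I :: "real set" and \<alpha> T V U :: "real \<Rightarrow> real^3" and kg kn tg :: "real \<Rightarrow> real"
  assumes open_I: "open I" and interval_I: "is_interval I"
    and frame: "darboux_frame I \<alpha> T V U kg kn tg"
    and smooth_kg: "smooth_on I kg" and smooth_kn: "smooth_on I kn" and smooth_tg: "smooth_on I tg"
begin

lemma alpha_deriv: "s \<in> I \<Longrightarrow> (\<alpha> has_vector_derivative T s) (at s)"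
  and T_deriv: "s \<in> I \<Longrightarrow> (T has_vector_derivative kg s *\<^sub>R V s + kn s *\<^sub>R U s) (at s)"
  and V_deriv: "s \<in> I \<Longrightarrow> (V has_vector_derivative - kg s *\<^sub>R T s + tg s *\<^sub>R U s) (at s)"
  and U_deriv: "s \<in> I \<Longrightarrow> (U has_vector_derivative - kn s *\<^sub>R T s - tg s *\<^sub>R V s) (at s)"
  using frame unfolding darboux_frame_def by blast+

lemma frame_orthonormal:
  assumes "s \<in> I"
  shows "T s \<bullet> T s = 1" "U s \<bullet> U s = 1" "V s \<bullet> V s = 1"
    and "T s \<bullet> U s = 0" "U s \<bullet> T s = 0" "T s \<bullet> V s = 0" "V s \<bullet> T s = 0"
    and "U s \<bullet> V s = 0" "V s \<bullet> U s = 0"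
proof -
  have T: "norm (T s) = 1" and U: "norm (U s) = 1" and TU: "T s \<bullet> U s = 0"
    and V: "V s = cross3 (U s) (T s)"
    using frame assms unfolding darboux_frame_def by blast+
  show "T s \<bullet> T s = 1" "U s \<bullet> U s = 1"
    using T U by (simp_all add: norm_eq_1)
  show "T s \<bullet> U s = 0" "U s \<bullet> T s = 0"
    using TU by (simp_all add: inner_commute)
  show "T s \<bullet> V s = 0" "V s \<bullet> T s = 0" "U s \<bullet> V s = 0" "V s \<bullet> U s = 0"
    unfolding V by (simp_all add: dot_cross_self)
  have "(norm (V s))\<^sup>2 = 1"
    using norm_cross_dot[of "U s" "T s"] T U TU unfolding V by (simp add: inner_commute)
  then show "V s \<bullet> V s = 1"
    by (simp add: power2_norm_eq_inner)
qed

lemma continuous_on_V: "continuous_on I V"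
  unfolding continuous_on_eq_continuous_at[OF open_I]
  using V_deriv has_vector_derivative_continuous by blast

lemma associated_curve_speed:
  assumes y: "smooth_on I y1" "smooth_on I y2" "smooth_on I y3"
    and \<gamma>: "\<forall>t\<in>I. \<gamma> t = \<alpha> t + y1 t *\<^sub>R T t + y2 t *\<^sub>R V t + y3 t *\<^sub>R U t"
    and R: "(\<gamma> has_vector_derivative R *\<^sub>R V s) (at s)" and s: "s \<in> I"
  shows "R = y1 s * kg s + vector_derivative y2 (at s) - y3 s * tg s"
proof -
  define G where "G = T s
    + (y1 s *\<^sub>R (kg s *\<^sub>R V s + kn s *\<^sub>R U s) + vector_derivative y1 (at s) *\<^sub>R T s)
    + (y2 s *\<^sub>R (- kg s *\<^sub>R T s + tg s *\<^sub>R U s) + vector_derivative y2 (at s) *\<^sub>R V s)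
    + (y3 s *\<^sub>R (- kn s *\<^sub>R T s - tg s *\<^sub>R V s) + vector_derivative y3 (at s) *\<^sub>R U s)"
  have "((\<lambda>t. \<alpha> t + y1 t *\<^sub>R T t + y2 t *\<^sub>R V t + y3 t *\<^sub>R U t) has_vector_derivative G) (at s)"
    unfolding G_def
    by (intro has_vector_derivative_add has_vector_derivative_scaleR
        alpha_deriv T_deriv V_deriv U_deriv smooth_on_has_real_derivative[OF y(1) s] smooth_on_has_real_derivative[OF y(2) s]
        smooth_on_has_real_derivative[OF y(3) s] s)
  then have "(\<gamma> has_vector_derivative G) (at s)"
    by (rule has_vector_derivative_transform_within_open[OF _ open_I s]) (use \<gamma> in auto)
  then have "R *\<^sub>R V s = G"
    using R vector_derivative_unique_at by blast
  then have "R * (V s \<bullet> V s) = G \<bullet> V s"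
    by (metis inner_scaleR_left)
  then show ?thesis
    using frame_orthonormal[OF s] unfolding G_def
    by (simp add: inner_add_left inner_diff_left algebra_simps)
qed

lemma continuous_on_associated_curve_speed:
  assumes y: "smooth_on I y1" "smooth_on I y2" "smooth_on I y3"
    and \<gamma>: "\<forall>t\<in>I. \<gamma> t = \<alpha> t + y1 t *\<^sub>R T t + y2 t *\<^sub>R V t + y3 t *\<^sub>R U t"
    and R: "\<forall>s\<in>I. (\<gamma> has_vector_derivative R s *\<^sub>R V s) (at s)"
  shows "continuous_on I R"
proof -
  have "continuous_on I (\<lambda>s. y1 s * kg s + vector_derivative y2 (at s) - y3 s * tg s)"
    using smooth_on_continuous_on[OF y(1)] smooth_on_continuous_on[OF y(3)]
      smooth_on_continuous_on[OF smooth_on_vector_derivative[OF y(2)]]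
      smooth_on_continuous_on[OF smooth_kg] smooth_on_continuous_on[OF smooth_tg]
    by (intro continuous_intros)
  then show ?thesis
    by (rule continuous_on_eq) (use associated_curve_speed[OF y \<gamma>] R in auto)
qed

end

locale nondegenerate_darboux_curve = darboux_curve +
  assumes nondegenerate: "s \<in> I \<Longrightarrow> (kg s, tg s) \<noteq> (0, 0)"
begin

definition \<rho> :: "real \<Rightarrow> real" where
  "\<rho> s = sqrt ((tg s)\<^sup>2 + (kg s)\<^sup>2)"

definition \<theta> :: "real \<Rightarrow> real" where
  "\<theta> s = (kg s * vector_derivative tg (at s) - tg s * vector_derivative kg (at s))
    / ((tg s)\<^sup>2 + (kg s)\<^sup>2)"

definition W :: "real \<Rightarrow> real^3" where
  "W s = (tg s / \<rho> s) *\<^sub>R T s + (kg s / \<rho> s) *\<^sub>R U s"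

definition N :: "real \<Rightarrow> real^3" where
  "N s = (kg s / \<rho> s) *\<^sub>R T s - (tg s / \<rho> s) *\<^sub>R U s"

lemma sum_sq_pos: "s \<in> I \<Longrightarrow> (tg s)\<^sup>2 + (kg s)\<^sup>2 > 0"
  using nondegenerate[of s] by (auto simp: sum_power2_gt_zero_iff)

lemma rho_pos: "s \<in> I \<Longrightarrow> \<rho> s > 0"
  using sum_sq_pos unfolding \<rho>_def by simp

lemma rho_sq: "s \<in> I \<Longrightarrow> \<rho> s * \<rho> s = (tg s)\<^sup>2 + (kg s)\<^sup>2"
  using sum_sq_pos unfolding \<rho>_def by simp

lemma norm_rect_darboux:
  assumes "s \<in> I"
  shows "norm (rect_darboux T U kg tg s) = \<rho> s"
proof -
  have "rect_darboux T U kg tg s \<bullet> rect_darboux T U kg tg s = (tg s)\<^sup>2 + (kg s)\<^sup>2"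
    unfolding rect_darboux_def using frame_orthonormal[OF assms]
    by (simp add: inner_add_left inner_add_right power2_eq_square)
  then show ?thesis
    unfolding \<rho>_def norm_eq_sqrt_inner by simp
qed

lemma unit_rect_darboux:
  assumes "s \<in> I"
  shows "rect_darboux T U kg tg s /\<^sub>R norm (rect_darboux T U kg tg s) = W s"
  using norm_rect_darboux[OF assms] unfolding W_def rect_darboux_def
  by (simp add: scaleR_add_right divide_inverse_commute)

lemma norm_W:
  assumes "s \<in> I"
  shows "norm (W s) = 1"
proof -
  have "rect_darboux T U kg tg s \<noteq> 0"
    using norm_rect_darboux[OF assms] rho_pos[OF assms] by auto
  then show ?thesis
    using unit_rect_darboux[OF assms] norm_sgn sgn_div_norm by metis
qed

lemma Dr_slant_helix_iff_const_inner_W: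
  "Dr_slant_helix I T U kg tg \<longleftrightarrow> (\<exists>d c. norm d = 1 \<and> (\<forall>s\<in>I. W s \<bullet> d = c))"
  unfolding Dr_slant_helix_def using unit_rect_darboux by auto

lemma tg_over_rho_deriv:
  assumes "s \<in> I"
  shows "((\<lambda>t. tg t / \<rho> t) has_real_derivative kg s / \<rho> s * \<theta> s) (at s)"
proof -
  have "(tg s)\<^sup>2 + (kg s)\<^sup>2 \<noteq> 0"
    using sum_sq_pos[OF assms] by linarith
  from has_real_derivative_normalized_pair[OF smooth_on_has_real_derivative[OF smooth_tg assms]
      smooth_on_has_real_derivative[OF smooth_kg assms] this]
  show ?thesis
    unfolding \<rho>_def[abs_def] \<theta>_def .
qed

lemma kg_over_rho_deriv:
  assumes "s \<in> I"
  shows "((\<lambda>t. kg t / \<rho> t) has_real_derivative - (tg s / \<rho> s * \<theta> s)) (at s)"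
proof -
  have "(kg s)\<^sup>2 + (tg s)\<^sup>2 \<noteq> 0"
    using sum_sq_pos[OF assms] by linarith
  from has_real_derivative_normalized_pair[OF smooth_on_has_real_derivative[OF smooth_kg assms]
      smooth_on_has_real_derivative[OF smooth_tg assms] this]
  have "((\<lambda>t. kg t / \<rho> t) has_real_derivative tg s / \<rho> s
      * ((tg s * vector_derivative kg (at s) - kg s * vector_derivative tg (at s))
         / ((tg s)\<^sup>2 + (kg s)\<^sup>2))) (at s)"
    unfolding \<rho>_def[abs_def] by (simp only: add.commute)
  moreover have "a * ((p - q) / r) = - (a * ((q - p) / r))" for a p q r :: real
    by (metis minus_diff_eq minus_divide_left mult_minus_right)
  ultimately show ?thesis
    unfolding \<theta>_def by metis
qed

lemma W_deriv:
  assumes "s \<in> I"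
  shows "(W has_vector_derivative (\<theta> s - kn s) *\<^sub>R N s) (at s)"
proof -
  define a b where "a = tg s / \<rho> s" and "b = kg s / \<rho> s"
  have "((\<lambda>t. (tg t / \<rho> t) *\<^sub>R T t + (kg t / \<rho> t) *\<^sub>R U t) has_vector_derivative
      (a *\<^sub>R (kg s *\<^sub>R V s + kn s *\<^sub>R U s) + (b * \<theta> s) *\<^sub>R T s)
      + (b *\<^sub>R (- kn s *\<^sub>R T s - tg s *\<^sub>R V s) + (- (a * \<theta> s)) *\<^sub>R U s)) (at s)"
    (is "(_ has_vector_derivative ?D) _")
    unfolding a_def b_def
    by (intro has_vector_derivative_add has_vector_derivative_scaleR
        tg_over_rho_deriv kg_over_rho_deriv T_deriv U_deriv assms)
  also have "?D = (\<theta> s - kn s) *\<^sub>R (b *\<^sub>R T s - a *\<^sub>R U s) + (a * kg s - b * tg s) *\<^sub>R V s"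
    by (simp add: algebra_simps)
  also have "a * kg s - b * tg s = 0"
    unfolding a_def b_def by simp
  finally show ?thesis
    unfolding W_def[abs_def] N_def a_def b_def by simp
qed

lemma N_deriv:
  assumes "s \<in> I"
  shows "(N has_vector_derivative - (\<theta> s - kn s) *\<^sub>R W s + \<rho> s *\<^sub>R V s) (at s)"
proof -
  define a b where "a = tg s / \<rho> s" and "b = kg s / \<rho> s"
  have "((\<lambda>t. (kg t / \<rho> t) *\<^sub>R T t - (tg t / \<rho> t) *\<^sub>R U t) has_vector_derivative
      (b *\<^sub>R (kg s *\<^sub>R V s + kn s *\<^sub>R U s) + (- (a * \<theta> s)) *\<^sub>R T s)
      - (a *\<^sub>R (- kn s *\<^sub>R T s - tg s *\<^sub>R V s) + (b * \<theta> s) *\<^sub>R U s)) (at s)"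
    (is "(_ has_vector_derivative ?D) _")
    unfolding a_def b_def
    by (intro has_vector_derivative_diff has_vector_derivative_scaleR
        tg_over_rho_deriv kg_over_rho_deriv T_deriv U_deriv assms)
  also have "?D = - (\<theta> s - kn s) *\<^sub>R (a *\<^sub>R T s + b *\<^sub>R U s) + (b * kg s + a * tg s) *\<^sub>R V s"
    by (simp add: algebra_simps)
  also have "b * kg s + a * tg s = \<rho> s"
    using rho_sq[OF assms] rho_pos[OF assms] unfolding a_def b_def
    by (simp add: field_simps power2_eq_square)
  finally show ?thesis
    unfolding W_def N_def[abs_def] a_def b_def .
qed

lemma V_deriv_rho:
  assumes "s \<in> I"
  shows "(V has_vector_derivative - \<rho> s *\<^sub>R N s) (at s)"
proof -
  have "- \<rho> s *\<^sub>R N s = - kg s *\<^sub>R T s + tg s *\<^sub>R U s"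
    using rho_pos[OF assms] unfolding N_def by (simp add: scaleR_diff_right)
  then show ?thesis
    using V_deriv[OF assms] by simp
qed

lemma frenet_equations_W_N_V: "frenet_equations I W N V (\<lambda>s. \<theta> s - kn s) \<rho>"
proof
  show "open I" "is_interval I"
    by (fact open_I interval_I)+
  show "(W has_vector_derivative (\<theta> s - kn s) *\<^sub>R N s) (at s)"
    and "(N has_vector_derivative - (\<theta> s - kn s) *\<^sub>R W s + \<rho> s *\<^sub>R V s) (at s)"
    and "(V has_vector_derivative - \<rho> s *\<^sub>R N s) (at s)"
    and "\<rho> s \<noteq> 0" if "s \<in> I" for s
    using W_deriv[OF that] N_deriv[OF that] V_deriv_rho[OF that] rho_pos[OF that] by simp_all
qed

lemma continuous_on_rho: "continuous_on I \<rho>"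
  unfolding \<rho>_def[abs_def]
  using smooth_on_continuous_on[OF smooth_kg] smooth_on_continuous_on[OF smooth_tg]
  by (intro continuous_intros)

lemma continuous_on_curvature: "continuous_on I (\<lambda>s. \<theta> s - kn s)"
proof -
  have "\<forall>s\<in>I. (tg s)\<^sup>2 + (kg s)\<^sup>2 \<noteq> 0"
    using sum_sq_pos by force
  then show ?thesis
    unfolding \<theta>_def
    using smooth_on_continuous_on[OF smooth_kg] smooth_on_continuous_on[OF smooth_tg]
      smooth_on_continuous_on[OF smooth_kn]
      smooth_on_continuous_on[OF smooth_on_vector_derivative[OF smooth_kg]]
      smooth_on_continuous_on[OF smooth_on_vector_derivative[OF smooth_tg]]
    by (intro continuous_intros) auto
qed

lemma inner_V_W: "s \<in> I \<Longrightarrow> V s \<bullet> W s = 0"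
  unfolding W_def using frame_orthonormal[of s] by (simp add: inner_add_right)

lemma rel_normal_slant_helix_iff_Dr_slant_helix:
  assumes "I \<noteq> {}"
  shows "rel_normal_slant_helix I V \<longleftrightarrow> Dr_slant_helix I T U kg tg"
proof -
  interpret frenet_equations I W N V "\<lambda>s. \<theta> s - kn s" \<rho>
    by (rule frenet_equations_W_N_V)
  show ?thesis
    unfolding rel_normal_slant_helix_def Dr_slant_helix_iff_const_inner_W
  proof
    assume "\<exists>d c. norm d = 1 \<and> (\<forall>s\<in>I. V s \<bullet> d = c)"
    then obtain d c where "norm d = 1" "\<forall>s\<in>I. V s \<bullet> d = c"
      by blast
    with const_inner_E3_imp_const_inner_E1 show "\<exists>d c. norm d = 1 \<and> (\<forall>s\<in>I. W s \<bullet> d = c)"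
      by blast
  next
    assume "\<exists>d c. norm d = 1 \<and> (\<forall>s\<in>I. W s \<bullet> d = c)"
    then obtain d c where "norm d = 1" "\<forall>s\<in>I. W s \<bullet> d = c"
      by blast
    then show "\<exists>e c. norm e = 1 \<and> (\<forall>s\<in>I. V s \<bullet> e = c)"
      using const_inner_E1_imp_const_inner_E3[OF continuous_on_curvature continuous_on_rho assms
            norm_W inner_V_W] by blast
  qed
qed

end

theorem theorem3p12:
  fixes I :: "real set"
    and \<alpha> T V U \<gamma> :: "real \<Rightarrow> real^3"
    and kg kn tg y1 y2 y3 R :: "real \<Rightarrow> real"
  assumes I: "open I" "is_interval I" "I \<noteq> {}"
    and smooth: "smooth_on I \<alpha>" "smooth_on I U"
      "smooth_on I kg" "smooth_on I kn" "smooth_on I tg"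
    and frame: "darboux_frame I \<alpha> T V U kg kn tg"
    and nondeg: "\<forall>s\<in>I. (kg s, tg s) \<noteq> (0, 0)"
    and ysmooth: "smooth_on I y1" "smooth_on I y2" "smooth_on I y3"
    and gamma: "\<forall>s\<in>I. \<gamma> s = \<alpha> s + y1 s *\<^sub>R T s + y2 s *\<^sub>R V s + y3 s *\<^sub>R U s"
    and tangent: "\<forall>s\<in>I. (\<gamma> has_vector_derivative R s *\<^sub>R V s) (at s) \<and> R s \<noteq> 0"
  shows "(general_helix I \<gamma> \<longleftrightarrow> rel_normal_slant_helix I V)
       \<and> (rel_normal_slant_helix I V \<longleftrightarrow> Dr_slant_helix I T U kg tg)"
proof -
  interpret nondegenerate_darboux_curve I \<alpha> T V U kg kn tg
    using I(1,2) frame smooth(3-5) nondeg by unfold_locales auto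
  have "general_helix I \<gamma> \<longleftrightarrow> rel_normal_slant_helix I V"
  proof (rule general_helix_iff_rel_normal_slant_helix)
    show "connected I"
      using I(2) is_interval_connected by blast
    show "norm (V s) = 1" if "s \<in> I" for s
      using frame_orthonormal(3)[OF that] by (simp add: norm_eq_1)
    show "continuous_on I R"
      using continuous_on_associated_curve_speed[OF ysmooth gamma] tangent by blast
  qed (use continuous_on_V tangent in auto)
  moreover have "rel_normal_slant_helix I V \<longleftrightarrow> Dr_slant_helix I T U kg tg"
    using rel_normal_slant_helix_iff_Dr_slant_helix I(3) .
  ultimately show ?thesis
    by blast
qed

end
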